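(* Let $D=[0,x_0]\times[0,y_0]$, let $\varphi:D\to\mathbb{R}$ be a smooth solution of $\varphi_{xy}=\sin\varphi$, and let $\mathcal{U}(x,y,\lambda)$ be its extended normalized frame, i.e. the solution of $$\partial_x\mathcal{U}=\mathcal{U}\,\frac{i}{2}\begin{pmatrix}\varphi_x&-\lambda\\-\lambda&-\varphi_x\end{pmatrix},\qquad \partial_y\mathcal{U}=\mathcal{U}\,\frac{i}{2}\lambda^{-1}\begin{pmatrix}0&e^{-i\varphi}\\ e^{i\varphi}&0\end{pmatrix},\qquad \mathcal{U}(0,0,\lambda)=I.$$ Let $\theta:D\to\mathbb{R}$ be smooth, let $\mathcal{R}(x,y)=\exp\!\big(\tfrac{i}{2}\theta(x,y)\sigma_3\big)$ be the ($\lambda$-independent) $\mathrm{SU}(2)$-matrix of the rotation by angle $\theta(x,y)$ about $e_3$, let $\mathcal{R}_0:=\mathcal{R}(0,0)$, and define the gauged frame $\hat{\mathcal{U}}:=\mathcal{R}_0^{-1}\,\mathcal{U}\,\mathcal{R}$. Suppose that at a point $(x,y)$ of an open set $\Omega\subset D$, both $\mathcal{U}$ and $\hat{\mathcal{U}}$ admit Birkhoff factorizations $$\mathcal{U}=\mathcal{U}_+V_-=\mathcal{U}_-V_+,\qquad \hat{\mathcal{U}}=\hat{\mathcal{U}}_+\hat V_-=\hat{\mathcal{U}}_-\hat V_+,$$ with $\mathcal{U}_+,\hat{\mathcal{U}}_+\in\Lambda^+_*\mathrm{SU}(2)$, $V_-,\hat V_-\in\Lambda^-\mathrm{SU}(2)$,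 $\mathcal{U}_-,\hat{\mathcal{U}}_-\in\Lambda^-_*\mathrm{SU}(2)$, $V_+,\hat V_+\in\Lambda^+\mathrm{SU}(2)$, for all $(x,y)\in\Omega$. Define the potentials on $\Omega$ by $$\eta^x:=-\lambda^{-1}\,\mathcal{U}_+^{-1}\partial_x\mathcal{U}_+,\quad \eta^y:=-\lambda\,\mathcal{U}_-^{-1}\partial_y\mathcal{U}_-,\quad \hat\eta^x:=-\lambda^{-1}\,\hat{\mathcal{U}}_+^{-1}\partial_x\hat{\mathcal{U}}_+,\quad \hat\eta^y:=-\lambda\,\hat{\mathcal{U}}_-^{-1}\partial_y\hat{\mathcal{U}}_-.$$ Then on $\Omega$ $$\hat\eta^x=\mathcal{R}_0^{-1}\,\eta^x\,\mathcal{R}_0,\qquad \hat\eta^y=\mathcal{R}_0^{-1}\,\eta^y\,\mathcal{R}_0.$$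
   Context: $I$ is the $2\times2$ identity and $\sigma_3=\mathrm{diag}(1,-1)$. The frame $\mathcal{U}(x,y,\lambda)$ is defined for $\lambda\in\mathbb{C}\setminus\{0\}$, is holomorphic in $\lambda$, is $\mathrm{SU}(2)$-valued for real $\lambda\neq 0$, and satisfies $\sigma_3\mathcal{U}(x,y,\lambda)\sigma_3=\mathcal{U}(x,y,-\lambda)$. Twisted loops: a loop is a map $g(\lambda)=\sum_{k\in\mathbb{Z}}g_k\lambda^k$ (Laurent series with $2\times2$ complex matrix coefficients converging on $\mathbb{C}\setminus\{0\}$) with $g(\lambda)\in\mathrm{SU}(2)$ for real $\lambda\ne0$ and $\sigma_3g(\lambda)\sigma_3=g(-\lambda)$. $\Lambda^+\mathrm{SU}(2)$: loops with $g_k=0$ for $k<0$; $\Lambda^+_*\mathrm{SU}(2)$: those in $\Lambda^+\mathrm{SU}(2)$ with $g_0=I$. $\Lambda^-\mathrm{SU}(2)$: loops with $g_k=0$ for $k>0$; $\Lambda^-_*\mathrm{SU}(2)$: those in $\Lambda^-\mathrm{SU}(2)$ with $g_0=I$. All factors are regarded as smooth functions of $(x,y)\in\Omega$ (and $\lambda$). *)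

theory Defs
  imports "HOL-Analysis.Analysis"
begin

type_synonym cmat = "complex^2^2"

definition mat2 :: "complex \<Rightarrow> complex \<Rightarrow> complex \<Rightarrow> complex \<Rightarrow> cmat" where
  "mat2 a b c d = (\<chi> i j. if i = 1 then (if j = 1 then a else b) else (if j = 1 then c else d))"

definition cscale :: "complex \<Rightarrow> cmat \<Rightarrow> cmat" where
  "cscale c M = (\<chi> i j. c * M $ i $ j)"

definition adjoint_mat :: "cmat \<Rightarrow> cmat" where
  "adjoint_mat A = (\<chi> i j. cnj (A $ j $ i))"

definition sigma3 :: cmat where
  "sigma3 = mat2 1 0 0 (-1)"

definition SU2 :: "cmat set" where
  "SU2 = {A. A ** adjoint_mat A = mat 1 \<and> det A = 1}"

text \<open>Rotation by angle t about e3: exp((i/2) t sigma3), written out (diagonal).\<close>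
definition rot :: "real \<Rightarrow> cmat" where
  "rot t = mat2 (exp (\<i> * of_real t / 2)) 0 0 (exp (- \<i> * of_real t / 2))"

definition laurent_coeffs :: "(complex \<Rightarrow> cmat) \<Rightarrow> (int \<Rightarrow> cmat) \<Rightarrow> bool" where
  "laurent_coeffs g c \<longleftrightarrow>
     (\<forall>lam. lam \<noteq> 0 \<longrightarrow> ((\<lambda>k. cscale (lam powi k) (c k)) has_sum g lam) (UNIV :: int set))"

definition twisted_loop :: "(complex \<Rightarrow> cmat) \<Rightarrow> bool" where
  "twisted_loop g \<longleftrightarrow> (\<exists>c. laurent_coeffs g c)
     \<and> (\<forall>t::real. t \<noteq> 0 \<longrightarrow> g (of_real t) \<in> SU2)
     \<and> (\<forall>lam. lam \<noteq> 0 \<longrightarrow> sigma3 ** g lam ** sigma3 = g (- lam))"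

definition loop_plus :: "(complex \<Rightarrow> cmat) \<Rightarrow> bool" where
  "loop_plus g \<longleftrightarrow> twisted_loop g \<and> (\<exists>c. laurent_coeffs g c \<and> (\<forall>k<0. c k = 0))"

definition loop_plus_star :: "(complex \<Rightarrow> cmat) \<Rightarrow> bool" where
  "loop_plus_star g \<longleftrightarrow> twisted_loop g \<and>
     (\<exists>c. laurent_coeffs g c \<and> (\<forall>k<0. c k = 0) \<and> c 0 = mat 1)"

definition loop_minus :: "(complex \<Rightarrow> cmat) \<Rightarrow> bool" where
  "loop_minus g \<longleftrightarrow> twisted_loop g \<and> (\<exists>c. laurent_coeffs g c \<and> (\<forall>k>0. c k = 0))"

definition loop_minus_star :: "(complex \<Rightarrow> cmat) \<Rightarrow> bool" where
  "loop_minus_star g \<longleftrightarrow> twisted_loop g \<and>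
     (\<exists>c. laurent_coeffs g c \<and> (\<forall>k>0. c k = 0) \<and> c 0 = mat 1)"

text \<open>Smoothness (C-infinity) of a function of (x,y) on S: f lies in a family of
  functions closed under taking the two partial derivatives, each member being
  (Frechet) differentiable on S (within S) with those partials.\<close>
definition smooth2_on :: "(real \<times> real) set \<Rightarrow> (real \<times> real \<Rightarrow> 'a::real_normed_vector) \<Rightarrow> bool" where
  "smooth2_on S f \<longleftrightarrow> (\<exists>F. f \<in> F \<and> (\<forall>g\<in>F. \<exists>gx\<in>F. \<exists>gy\<in>F. \<forall>p\<in>S.
      (g has_derivative (\<lambda>h. fst h *\<^sub>R gx p + snd h *\<^sub>R gy p)) (at p within S)))"

definition partial_x :: "(real \<Rightarrow> real \<Rightarrow> complex \<Rightarrow> cmat) \<Rightarrow> real \<Rightarrow> real \<Rightarrow> complex \<Rightarrow> cmat" where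
  "partial_x F x y lam = vector_derivative (\<lambda>s. F s y lam) (at x)"

definition partial_y :: "(real \<Rightarrow> real \<Rightarrow> complex \<Rightarrow> cmat) \<Rightarrow> real \<Rightarrow> real \<Rightarrow> complex \<Rightarrow> cmat" where
  "partial_y F x y lam = vector_derivative (\<lambda>t. F x t lam) (at y)"

end

(*
  Since R_0 and R(x,y) are diagonal SU(2) matrices they commute with sigma_3, so conjugating
  U = U_+ V_- gives the factorization  R_0^-1 U R = (R_0^-1 U_+ R_0) (R_0^-1 V_- R)  of the
  same type as U^ = U^_+ V^_-.  Such factorizations are unique: if P M = Q N with P, Q in
  Lambda^+_* and M, N in Lambda^-, then Q^-1 P = N M^-1 extends to an entire function that
  is also holomorphic at infinity, hence constant by Liouville, and equal to its value I at
  lambda = 0 (all determinants are 1 by analytic continuation from the real axis, where the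
  loops are SU(2)-valued).  So U^_+ = R_0^-1 U_+ R_0 on Omega; as R_0 does not depend on (x,y), the
  potentials are conjugated by R_0 as well.  The minus side is the same argument after the
  substitution lambda -> 1/lambda, which exchanges the two loop groups.
*)
theory Submission
  imports Defs "HOL-Complex_Analysis.Conformal_Mappings"
begin

lemma matrix_mult_2_nth:
  "((A::'a::semiring_1^2^'m) ** (B::'a^'n^2)) $ i $ j = A$i$1 * B$1$j + A$i$2 * B$2$j"
  by (simp add: matrix_matrix_mult_def sum_2)

lemma mat_2_2_eq_iff:
  "(A::'a^2^2) = B \<longleftrightarrow> A$1$1 = B$1$1 \<and> A$1$2 = B$1$2 \<and> A$2$1 = B$2$1 \<and> A$2$2 = B$2$2"
  by (auto simp: vec_eq_iff forall_2)

lemma mat2_nth [simp]: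
  "mat2 a b c d $ 1 $ 1 = a" "mat2 a b c d $ 1 $ 2 = b"
  "mat2 a b c d $ 2 $ 1 = c" "mat2 a b c d $ 2 $ 2 = d"
  by (simp_all add: mat2_def)

lemma mat_2_2_nth [simp]:
  "(mat x :: 'a::zero^2^2) $ 1 $ 1 = x" "(mat x :: 'a^2^2) $ 1 $ 2 = 0"
  "(mat x :: 'a^2^2) $ 2 $ 1 = 0" "(mat x :: 'a^2^2) $ 2 $ 2 = x"
  by (simp_all add: mat_def)

lemma cscale_nth [simp]: "cscale c M $ i $ j = c * M $ i $ j"
  by (simp add: cscale_def)

lemma adjoint_mat_nth [simp]: "adjoint_mat A $ i $ j = cnj (A $ j $ i)"
  by (simp add: adjoint_mat_def)

lemma matrix_mult_cscale_right: "A ** cscale c B = cscale c (A ** B)"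
  by (simp add: mat_2_2_eq_iff matrix_mult_2_nth algebra_simps)

lemma matrix_mult_cscale_left: "cscale c A ** B = cscale c (A ** B)"
  by (simp add: mat_2_2_eq_iff matrix_mult_2_nth algebra_simps)

lemma adjoint_mat_mult: "adjoint_mat (A ** B) = adjoint_mat B ** adjoint_mat A"
  by (simp add: mat_2_2_eq_iff matrix_mult_2_nth algebra_simps)

lemma SU2_mult: "A \<in> SU2 \<Longrightarrow> B \<in> SU2 \<Longrightarrow> A ** B \<in> SU2"
  unfolding SU2_def
  by (simp add: det_mul adjoint_mat_mult matrix_mul_assoc)
     (metis matrix_mul_assoc matrix_mul_rid)

lemma matrix_inv_right: "invertible (A::'a::field^'n^'n) \<Longrightarrow> A ** matrix_inv A = mat 1"
  unfolding invertible_def matrix_inv_def by (rule someI2_ex) auto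

lemma matrix_inv_left: "invertible (A::'a::field^'n^'n) \<Longrightarrow> matrix_inv A ** A = mat 1"
  unfolding invertible_def matrix_inv_def by (rule someI2_ex) auto

lemma matrix_inv_unique:
  assumes "(A::'a::field^'n^'n) ** B = mat 1"
  shows "matrix_inv A = B"
proof -
  have "invertible A"
    using assms invertible_right_inverse by blast
  have "matrix_inv A = matrix_inv A ** (A ** B)"
    using assms by simp
  also have "\<dots> = (matrix_inv A ** A) ** B"
    by (simp only: matrix_mul_assoc)
  also have "\<dots> = B"
    using \<open>invertible A\<close> by (simp add: matrix_inv_left)
  finally show ?thesis .
qed

lemma matrix_inv_factor_swap:
  fixes P Q M N :: "'a::field^'n^'n"
  assumes "invertible Q" "invertible M" "P ** M = Q ** N"
  shows "matrix_inv Q ** P = N ** matrix_inv M"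
proof -
  have "matrix_inv Q ** P = matrix_inv Q ** P ** (M ** matrix_inv M)"
    using assms(2) by (simp add: matrix_inv_right)
  also have "\<dots> = matrix_inv Q ** (Q ** N) ** matrix_inv M"
    using assms(3) by (metis matrix_mul_assoc)
  also have "\<dots> = (matrix_inv Q ** Q) ** N ** matrix_inv M"
    by (simp only: matrix_mul_assoc)
  also have "\<dots> = N ** matrix_inv M"
    using assms(1) by (simp add: matrix_inv_left)
  finally show ?thesis .
qed

lemma matrix_inv_conj:
  fixes A A' X :: "'a::field^'n^'n"
  assumes "A' ** A = mat 1" "invertible X"
  shows "matrix_inv (A' ** X ** A) = A' ** matrix_inv X ** A"
proof (rule matrix_inv_unique)
  have "A' ** X ** A ** (A' ** matrix_inv X ** A) = A' ** X ** (A ** A') ** matrix_inv X ** A"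
    by (simp only: matrix_mul_assoc)
  also have "\<dots> = A' ** (X ** matrix_inv X) ** A"
    using assms(1) matrix_left_right_inverse by (metis matrix_mul_assoc matrix_mul_rid)
  also have "\<dots> = mat 1"
    using assms by (simp add: matrix_inv_right)
  finally show "A' ** X ** A ** (A' ** matrix_inv X ** A) = mat 1" .
qed

lemma cscale_matrix_inv_conj:
  assumes "A' ** A = mat 1" "invertible X"
  shows "cscale c (matrix_inv (A' ** X ** A) ** (A' ** D ** A))
    = A' ** cscale c (matrix_inv X ** D) ** A"
proof -
  have "A' ** matrix_inv X ** A ** (A' ** D ** A) = A' ** matrix_inv X ** (A ** A') ** D ** A"
    by (simp only: matrix_mul_assoc)
  also have "\<dots> = A' ** (matrix_inv X ** D) ** A"
    using assms(1) matrix_left_right_inverse by (metis matrix_mul_assoc matrix_mul_rid)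
  finally show ?thesis
    using assms by (simp add: matrix_inv_conj matrix_mult_cscale_left matrix_mult_cscale_right)
qed

definition adjugate2 :: "cmat \<Rightarrow> cmat" where
  "adjugate2 A = mat2 (A$2$2) (- A$1$2) (- A$2$1) (A$1$1)"

lemma matrix_inv_eq_adjugate2: "det A = 1 \<Longrightarrow> matrix_inv A = adjugate2 A"
  by (rule matrix_inv_unique)
     (simp add: mat_2_2_eq_iff matrix_mult_2_nth adjugate2_def det_2 algebra_simps)

lemma invertible_det_1: "det (A::'a::field^'n^'n) = 1 \<Longrightarrow> invertible A"
  by (simp add: invertible_det_nz)

lemma rot_add: "rot a ** rot b = rot (a + b)"
proof -
  have "exp (\<i> * of_real a / 2) * exp (\<i> * of_real b / 2) = exp (\<i> * of_real (a + b) / 2)"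
    "exp (- \<i> * of_real a / 2) * exp (- \<i> * of_real b / 2) = exp (- \<i> * of_real (a + b) / 2)"
    by (simp_all add: exp_add[symmetric] field_simps)
  then show ?thesis
    by (simp add: mat_2_2_eq_iff matrix_mult_2_nth rot_def)
qed

lemma rot_0: "rot 0 = mat 1"
  by (simp add: rot_def mat_2_2_eq_iff)

lemma rot_inverse: "rot (- a) ** rot a = mat 1" "rot a ** rot (- a) = mat 1"
  by (simp_all add: rot_add rot_0)

lemma matrix_inv_rot: "matrix_inv (rot a) = rot (- a)"
  by (rule matrix_inv_unique) (rule rot_inverse)

lemma rot_in_SU2: "rot a \<in> SU2"
proof -
  have "adjoint_mat (rot a) = rot (- a)"
    by (simp add: mat_2_2_eq_iff rot_def exp_cnj)
  moreover have "det (rot a) = 1"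
    by (simp add: det_2 rot_def exp_add[symmetric])
  ultimately show ?thesis
    by (simp add: SU2_def rot_inverse)
qed

lemma sigma3_rot_commute: "sigma3 ** rot a = rot a ** sigma3"
  by (simp add: mat_2_2_eq_iff matrix_mult_2_nth sigma3_def rot_def)

subsection \<open>Operations on twisted loops\<close>

lemma bounded_linear_matrix_mult_both: "bounded_linear (\<lambda>M::cmat. A ** M ** B)"
proof -
  have "linear (\<lambda>M::cmat. A ** M ** B)"
    by (rule linearI) (simp_all add: vec_eq_iff matrix_matrix_mult_def sum_distrib_left
        sum.distrib scaleR_sum_right algebra_simps)
  then show ?thesis
    by (simp add: linear_conv_bounded_linear)
qed

lemma laurent_coeffs_mult_const:
  assumes "laurent_coeffs g c"
  shows "laurent_coeffs (\<lambda>z. A ** g z ** B) (\<lambda>k. A ** c k ** B)"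
  unfolding laurent_coeffs_def
proof (intro allI impI)
  fix z :: complex assume "z \<noteq> 0"
  then have "((\<lambda>k. cscale (z powi k) (c k)) has_sum g z) UNIV"
    using assms by (simp add: laurent_coeffs_def)
  from has_sum_bounded_linear[OF bounded_linear_matrix_mult_both[of A B] this]
  show "((\<lambda>k. cscale (z powi k) (A ** c k ** B)) has_sum A ** g z ** B) UNIV"
    by (simp add: matrix_mult_cscale_left matrix_mult_cscale_right)
qed

lemma laurent_coeffs_reflect:
  assumes "laurent_coeffs g c"
  shows "laurent_coeffs (\<lambda>z. g (inverse z)) (\<lambda>k. c (- k))"
  unfolding laurent_coeffs_def
proof (intro allI impI)
  fix z :: complex assume "z \<noteq> 0"
  then have "((\<lambda>k. cscale (inverse z powi k) (c k)) has_sum g (inverse z)) UNIV"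
    using assms by (simp add: laurent_coeffs_def)
  moreover have "bij_betw uminus (UNIV::int set) UNIV"
    by (rule bij_betwI') (auto intro: minus_minus[symmetric])
  ultimately have "((\<lambda>k. cscale (inverse z powi (- k)) (c (- k))) has_sum g (inverse z)) UNIV"
    by (subst has_sum_reindex_bij_betw) auto
  then show "((\<lambda>k. cscale (z powi k) (c (- k))) has_sum g (inverse z)) UNIV"
    by (simp add: power_int_minus power_int_inverse)
qed

lemma twisted_loop_rot_mult:
  assumes "twisted_loop g"
  shows "twisted_loop (\<lambda>z. rot a ** g z ** rot b)"
proof -
  obtain c where "laurent_coeffs g c"
    using assms twisted_loop_def by blast
  then have "laurent_coeffs (\<lambda>z. rot a ** g z ** rot b) (\<lambda>k. rot a ** c k ** rot b)"
    by (rule laurent_coeffs_mult_const)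
  moreover have "rot a ** g (of_real t) ** rot b \<in> SU2" if "t \<noteq> 0" for t
    using assms that by (simp add: twisted_loop_def SU2_mult rot_in_SU2)
  moreover have "sigma3 ** (rot a ** g z ** rot b) ** sigma3 = rot a ** g (- z) ** rot b"
    if "z \<noteq> 0" for z
  proof -
    have "sigma3 ** (rot a ** g z ** rot b) ** sigma3 = (sigma3 ** rot a) ** g z ** (rot b ** sigma3)"
      by (simp only: matrix_mul_assoc)
    also have "\<dots> = (rot a ** sigma3) ** g z ** (sigma3 ** rot b)"
      by (simp only: sigma3_rot_commute)
    also have "\<dots> = rot a ** (sigma3 ** g z ** sigma3) ** rot b"
      by (simp only: matrix_mul_assoc)
    also have "\<dots> = rot a ** g (- z) ** rot b"
      using assms that by (simp add: twisted_loop_def)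
    finally show ?thesis .
  qed
  ultimately show ?thesis
    unfolding twisted_loop_def by blast
qed

lemma twisted_loop_reflect:
  assumes "twisted_loop g"
  shows "twisted_loop (\<lambda>z. g (inverse z))"
proof -
  obtain c where "laurent_coeffs g c"
    using assms twisted_loop_def by blast
  then have "laurent_coeffs (\<lambda>z. g (inverse z)) (\<lambda>k. c (- k))"
    by (rule laurent_coeffs_reflect)
  moreover have "g (inverse (of_real t)) \<in> SU2" if "t \<noteq> 0" for t
    using assms that unfolding twisted_loop_def by (simp flip: of_real_inverse)
  moreover have "sigma3 ** g (inverse z) ** sigma3 = g (inverse (- z))" if "z \<noteq> 0" for z
    using assms that unfolding twisted_loop_def by simp
  ultimately show ?thesis
    unfolding twisted_loop_def by blast
qed

lemma loop_plus_star_rot_conj: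
  assumes "loop_plus_star g"
  shows "loop_plus_star (\<lambda>z. rot (- a) ** g z ** rot a)"
proof -
  obtain c where c: "laurent_coeffs g c" "\<forall>k<0. c k = 0" "c 0 = mat 1" and "twisted_loop g"
    using assms loop_plus_star_def by blast
  then show ?thesis
    unfolding loop_plus_star_def
    using laurent_coeffs_mult_const[OF c(1)] twisted_loop_rot_mult
    by (intro conjI exI[of _ "\<lambda>k. rot (- a) ** c k ** rot a"]) (auto simp: rot_inverse)
qed

lemma loop_minus_rot_mult:
  assumes "loop_minus g"
  shows "loop_minus (\<lambda>z. rot a ** g z ** rot b)"
proof -
  obtain c where c: "laurent_coeffs g c" "\<forall>k>0. c k = 0" and "twisted_loop g"
    using assms loop_minus_def by blast
  then show ?thesis
    unfolding loop_minus_def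
    using laurent_coeffs_mult_const[OF c(1)] twisted_loop_rot_mult
    by (intro conjI exI[of _ "\<lambda>k. rot a ** c k ** rot b"]) auto
qed

lemma loop_plus_star_imp_loop_plus: "loop_plus_star g \<Longrightarrow> loop_plus g"
  unfolding loop_plus_star_def loop_plus_def by blast

lemma loop_minus_star_imp_loop_minus: "loop_minus_star g \<Longrightarrow> loop_minus g"
  unfolding loop_minus_star_def loop_minus_def by blast

lemma loop_minus_reflect: "loop_minus g \<Longrightarrow> loop_plus (\<lambda>z. g (inverse z))"
  unfolding loop_minus_def loop_plus_def
  using twisted_loop_reflect laurent_coeffs_reflect by fastforce

lemma loop_plus_reflect: "loop_plus g \<Longrightarrow> loop_minus (\<lambda>z. g (inverse z))"
  unfolding loop_minus_def loop_plus_def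
  using twisted_loop_reflect laurent_coeffs_reflect by fastforce

lemma loop_minus_star_reflect: "loop_minus_star g \<Longrightarrow> loop_plus_star (\<lambda>z. g (inverse z))"
  unfolding loop_minus_star_def loop_plus_star_def
  using twisted_loop_reflect laurent_coeffs_reflect by fastforce

subsection \<open>Entire extension of loops in the positive loop group\<close>

text \<open>Entrywise, because \<^const>\<open>holomorphic_on\<close> needs a field as codomain.\<close>
definition entire_mat :: "(complex \<Rightarrow> cmat) \<Rightarrow> bool" where
  "entire_mat F \<longleftrightarrow> (\<forall>i j. (\<lambda>z. F z $ i $ j) holomorphic_on UNIV)"

lemma entire_mat_mult: "entire_mat F \<Longrightarrow> entire_mat G \<Longrightarrow> entire_mat (\<lambda>z. F z ** G z)"
  unfolding entire_mat_def matrix_mult_2_nth by (auto intro!: holomorphic_intros)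

lemma entire_mat_adjugate2: "entire_mat F \<Longrightarrow> entire_mat (\<lambda>z. adjugate2 (F z))"
  unfolding entire_mat_def adjugate2_def forall_2 by (auto intro!: holomorphic_intros)

lemma entire_mat_det: "entire_mat F \<Longrightarrow> (\<lambda>z. det (F z)) holomorphic_on UNIV"
  unfolding entire_mat_def det_2 by (auto intro!: holomorphic_intros)

lemma holomorphic_on_UNIV_power_series:
  assumes "\<And>z. (\<lambda>n. a n * z ^ n) sums f z"
  shows "f holomorphic_on UNIV"
  unfolding holomorphic_on_def
proof
  fix z :: complex
  have "f holomorphic_on ball 0 (norm z + 1)"
    by (rule power_series_holomorphic) (use assms in simp)
  then show "f field_differentiable at z within UNIV"
    by (simp add: holomorphic_on_imp_differentiable_at)
qed

lemma has_sum_int_imp_sums: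
  fixes f :: "int \<Rightarrow> 'a::{comm_monoid_add, t2_space}"
  assumes "(f has_sum s) UNIV" "\<And>k. k < 0 \<Longrightarrow> f k = 0"
  shows "(\<lambda>n. f (int n)) sums s"
proof -
  have "k < 0" if "k \<notin> range int" for k :: int
    using that by (metis nonneg_int_cases not_le range_eqI)
  then have "(f has_sum s) (range int) \<longleftrightarrow> (f has_sum s) UNIV"
    using assms(2) by (intro has_sum_cong_neutral) auto
  then have "((f \<circ> int) has_sum s) UNIV"
    using assms(1) by (simp add: has_sum_reindex)
  then show ?thesis
    by (simp add: has_sum_imp_sums o_def)
qed

definition matrix_power_series :: "(int \<Rightarrow> cmat) \<Rightarrow> complex \<Rightarrow> cmat" where
  "matrix_power_series c z = (\<chi> i j. \<Sum>n. c (int n) $ i $ j * z ^ n)"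

lemma matrix_power_series_0: "matrix_power_series c 0 = c 0"
  by (simp add: matrix_power_series_def vec_eq_iff powser_zero)

lemma laurent_coeffs_power_series_sums:
  assumes "laurent_coeffs g c" "\<And>k. k < 0 \<Longrightarrow> c k = 0" "z \<noteq> 0"
  shows "(\<lambda>n. c (int n) $ i $ j * z ^ n) sums (g z $ i $ j)"
proof -
  have "((\<lambda>k. cscale (z powi k) (c k)) has_sum g z) UNIV"
    using assms(1,3) by (simp add: laurent_coeffs_def)
  from has_sum_bounded_linear[OF _ this, of "\<lambda>M. M $ i $ j"]
  have "((\<lambda>k. z powi k * c k $ i $ j) has_sum g z $ i $ j) UNIV"
    by (simp add: bounded_linear_compose[OF bounded_linear_vec_nth bounded_linear_vec_nth])
  from has_sum_int_imp_sums[OF this] show ?thesis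
    using assms(2) by (simp add: power_int_of_nat mult.commute)
qed

lemma
  assumes "laurent_coeffs g c" "\<And>k. k < 0 \<Longrightarrow> c k = 0"
  shows matrix_power_series_eq: "z \<noteq> 0 \<Longrightarrow> matrix_power_series c z = g z"
    and entire_matrix_power_series: "entire_mat (matrix_power_series c)"
proof -
  show "z \<noteq> 0 \<Longrightarrow> matrix_power_series c z = g z"
    using laurent_coeffs_power_series_sums[OF assms]
    by (simp add: matrix_power_series_def vec_eq_iff sums_iff)
  have "(\<lambda>n. c (int n) $ i $ j * z ^ n) sums (\<Sum>n. c (int n) $ i $ j * z ^ n)" for i j z
    using laurent_coeffs_power_series_sums[OF assms] powser_sums_zero
    by (cases "z = 0") (auto simp: sums_iff)
  then have "(\<lambda>z. \<Sum>n. c (int n) $ i $ j * z ^ n) holomorphic_on UNIV" for i j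
    by (rule holomorphic_on_UNIV_power_series)
  then show "entire_mat (matrix_power_series c)"
    by (simp add: entire_mat_def matrix_power_series_def)
qed

lemma det_entire_extension:
  assumes "twisted_loop g" "entire_mat G" "\<And>z. z \<noteq> 0 \<Longrightarrow> G z = g z"
  shows "det (G z) = 1"
proof -
  define U where "U = complex_of_real ` {t. t \<noteq> 0}"
  have "0 islimpt U"
    unfolding islimpt_approachable
  proof (intro allI impI)
    fix e :: real assume "0 < e"
    then have "complex_of_real (e / 2) \<in> U"
      unfolding U_def by (intro imageI) simp
    with \<open>0 < e\<close> show "\<exists>w\<in>U. w \<noteq> 0 \<and> dist w 0 < e"
      by (intro bexI[of _ "complex_of_real (e / 2)"]) simp_all
  qed
  moreover have "(\<lambda>z. det (G z) - 1) holomorphic_on UNIV"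
    using assms(2) by (intro holomorphic_intros entire_mat_det)
  moreover have "det (G w) - 1 = 0" if "w \<in> U" for w
  proof -
    obtain t where "t \<noteq> 0" "w = of_real t"
      using \<open>w \<in> U\<close> U_def by blast
    then have "G w \<in> SU2"
      using assms(1,3) by (simp add: twisted_loop_def)
    then show ?thesis
      by (simp add: SU2_def)
  qed
  ultimately have "det (G z) - 1 = 0"
    using analytic_continuation[of _ UNIV U 0 z] by blast
  then show ?thesis
    by simp
qed

lemma twisted_loop_entire_extension:
  assumes "twisted_loop g" "laurent_coeffs g c" "\<forall>k<0. c k = 0"
  obtains G where "entire_mat G" "\<And>z. z \<noteq> 0 \<Longrightarrow> G z = g z" "\<And>z. det (G z) = 1"
    "G 0 = c 0"
proof
  show "entire_mat (matrix_power_series c)"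
    using assms(2,3) by (simp add: entire_matrix_power_series)
  show eq: "matrix_power_series c z = g z" if "z \<noteq> 0" for z
    using assms(2,3) that by (simp add: matrix_power_series_eq)
  show "det (matrix_power_series c z) = 1" for z
    using assms(1) \<open>entire_mat (matrix_power_series c)\<close> eq by (rule det_entire_extension)
  show "matrix_power_series c 0 = c 0"
    by (rule matrix_power_series_0)
qed

lemma loop_plus_extension:
  assumes "loop_plus g"
  obtains G where "entire_mat G" "\<And>z. z \<noteq> 0 \<Longrightarrow> G z = g z" "\<And>z. det (G z) = 1"
proof -
  obtain c where c: "twisted_loop g" "laurent_coeffs g c" "\<forall>k<0. c k = 0"
    using assms loop_plus_def by blast
  show ?thesis
    by (rule twisted_loop_entire_extension[OF c]) (rule that)
qed

lemma loop_plus_star_extension: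
  assumes "loop_plus_star g"
  obtains G where "entire_mat G" "\<And>z. z \<noteq> 0 \<Longrightarrow> G z = g z" "\<And>z. det (G z) = 1"
    "G 0 = mat 1"
proof -
  obtain c where c: "twisted_loop g" "laurent_coeffs g c" "\<forall>k<0. c k = 0"
    "c 0 = mat 1"
    using assms loop_plus_star_def by blast
  obtain G where G: "entire_mat G" "\<And>z. z \<noteq> 0 \<Longrightarrow> G z = g z" "\<And>z. det (G z) = 1"
    "G 0 = c 0"
    by (rule twisted_loop_entire_extension[OF c(1-3)]) (rule that)
  show ?thesis
    using G c(4) by (intro that[of G]) simp_all
qed

lemma loop_minus_extension:
  assumes "loop_minus g"
  obtains H where "entire_mat H" "\<And>z. z \<noteq> 0 \<Longrightarrow> g z = H (inverse z)" "\<And>z. det (H z) = 1"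
proof -
  obtain H where H: "entire_mat H" "\<And>z. z \<noteq> 0 \<Longrightarrow> H z = g (inverse z)" "\<And>z. det (H z) = 1"
    by (rule loop_plus_extension[OF loop_minus_reflect[OF assms]]) (rule that)
  show ?thesis
  proof (rule that[OF H(1) _ H(3)])
    show "g z = H (inverse z)" if "z \<noteq> 0" for z
      using H(2)[of "inverse z"] that by simp
  qed
qed

lemma loop_plus_det:
  assumes "loop_plus g" "z \<noteq> 0"
  shows "det (g z) = 1"
proof -
  obtain G where "entire_mat G" "\<And>z. z \<noteq> 0 \<Longrightarrow> G z = g z" "\<And>z. det (G z) = 1"
    by (rule loop_plus_extension[OF assms(1)]) (rule that)
  then show ?thesis
    using assms(2) by metis
qed

lemma loop_minus_det:
  assumes "loop_minus g" "z \<noteq> 0"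
  shows "det (g z) = 1"
proof -
  obtain H where "entire_mat H" "\<And>z. z \<noteq> 0 \<Longrightarrow> g z = H (inverse z)" "\<And>z. det (H z) = 1"
    by (rule loop_minus_extension[OF assms(1)]) (rule that)
  then show ?thesis
    using assms(2) by metis
qed

subsection \<open>Uniqueness of the Birkhoff factorization\<close>

lemma entire_constant_if_entire_at_infinity:
  fixes f h :: "complex \<Rightarrow> complex"
  assumes "f holomorphic_on UNIV" "h holomorphic_on UNIV" "\<And>z. z \<noteq> 0 \<Longrightarrow> f z = h (inverse z)"
  shows "f z = f 0"
proof -
  have "compact (f ` cball 0 1)" "compact (h ` cball 0 1)"
    using assms(1,2)
    by (auto intro!: compact_continuous_image holomorphic_on_imp_continuous_on
        intro: holomorphic_on_subset)
  then have "bounded (f ` cball 0 1 \<union> h ` cball 0 1)"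
    by (simp add: compact_imp_bounded)
  moreover have "range f \<subseteq> f ` cball 0 1 \<union> h ` cball 0 1"
  proof
    fix w assume "w \<in> range f"
    then obtain z where z: "w = f z" by blast
    show "w \<in> f ` cball 0 1 \<union> h ` cball 0 1"
    proof (cases "norm z \<le> 1")
      case False
      then have "z \<noteq> 0"
        by auto
      with False have "inverse z \<in> cball 0 1" "w = h (inverse z)"
        using assms(3) z by (auto simp: norm_inverse inverse_le_1_iff)
      then show ?thesis by blast
    qed (use z in auto)
  qed
  ultimately have "bounded (range f)"
    by (rule bounded_subset)
  then obtain k where "\<And>w. f w = k"
    using Liouville_theorem[OF assms(1)] by (auto simp: constant_on_def)
  then show ?thesis
    by simp
qed

lemma entire_mat_constant_if_entire_at_infinity:
  assumes "entire_mat F" "entire_mat H" "\<And>z. z \<noteq> 0 \<Longrightarrow> F z = H (inverse z)"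
  shows "F z = F 0"
proof -
  have "F z $ i $ j = F 0 $ i $ j" for i j
    using assms unfolding entire_mat_def
    by (intro entire_constant_if_entire_at_infinity[of "\<lambda>z. F z $ i $ j" "\<lambda>z. H z $ i $ j"]) auto
  then show ?thesis
    by (simp add: vec_eq_iff)
qed

lemma entire_factorization_unique:
  assumes "entire_mat P" "entire_mat Q" "entire_mat M" "entire_mat N"
    and "P 0 = mat 1" "Q 0 = mat 1" "\<And>w. det (Q w) = 1" "\<And>w. det (M w) = 1"
    and eq: "\<And>w. w \<noteq> 0 \<Longrightarrow> P w ** M (inverse w) = Q w ** N (inverse w)"
  shows "P z = Q z"
proof -
  define F where "F w = adjugate2 (Q w) ** P w" for w
  define H where "H w = N w ** adjugate2 (M w)" for w
  have "F w = H (inverse w)" if "w \<noteq> 0" for w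
    using matrix_inv_factor_swap[OF _ _ eq[OF that]] assms(7,8)
    by (simp add: F_def H_def invertible_det_1 matrix_inv_eq_adjugate2)
  moreover have "entire_mat F" "entire_mat H"
    unfolding F_def H_def using assms(1-4)
    by (simp_all add: entire_mat_mult entire_mat_adjugate2)
  ultimately have "F z = F 0"
    by (intro entire_mat_constant_if_entire_at_infinity[of F H])
  also have "F 0 = mat 1"
    using assms(5,6) by (simp add: F_def adjugate2_def mat_2_2_eq_iff matrix_mult_2_nth)
  finally have "matrix_inv (Q z) ** P z = mat 1"
    using assms(7) by (simp add: F_def matrix_inv_eq_adjugate2)
  have "P z = (Q z ** matrix_inv (Q z)) ** P z"
    using assms(7) by (simp add: invertible_det_1 matrix_inv_right)
  also have "\<dots> = Q z"
    using \<open>matrix_inv (Q z) ** P z = mat 1\<close> by (simp flip: matrix_mul_assoc)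
  finally show ?thesis .
qed

lemma birkhoff_plus_factor_unique:
  assumes P: "loop_plus_star P" and Q: "loop_plus_star Q"
    and M: "loop_minus M" and N: "loop_minus N"
    and eq: "\<And>z. z \<noteq> 0 \<Longrightarrow> P z ** M z = Q z ** N z" and "z \<noteq> 0"
  shows "P z = Q z"
proof -
  obtain GP where GP: "entire_mat GP" "\<And>z. z \<noteq> 0 \<Longrightarrow> GP z = P z" "\<And>z. det (GP z) = 1"
    "GP 0 = mat 1"
    by (rule loop_plus_star_extension[OF P]) (rule that)
  obtain GQ where GQ: "entire_mat GQ" "\<And>z. z \<noteq> 0 \<Longrightarrow> GQ z = Q z" "\<And>z. det (GQ z) = 1"
    "GQ 0 = mat 1"
    by (rule loop_plus_star_extension[OF Q]) (rule that)
  obtain HM where HM: "entire_mat HM" "\<And>z. z \<noteq> 0 \<Longrightarrow> M z = HM (inverse z)"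
    "\<And>z. det (HM z) = 1"
    by (rule loop_minus_extension[OF M]) (rule that)
  obtain HN where HN: "entire_mat HN" "\<And>z. z \<noteq> 0 \<Longrightarrow> N z = HN (inverse z)"
    "\<And>z. det (HN z) = 1"
    by (rule loop_minus_extension[OF N]) (rule that)
  have "GP z = GQ z"
  proof (rule entire_factorization_unique[OF GP(1) GQ(1) HM(1) HN(1) GP(4) GQ(4) GQ(3) HM(3)])
    show "GP w ** HM (inverse w) = GQ w ** HN (inverse w)" if "w \<noteq> 0" for w
      using eq[OF that] GP(2) GQ(2) HM(2) HN(2) that by simp
  qed
  then show ?thesis
    using GP(2) GQ(2) \<open>z \<noteq> 0\<close> by simp
qed

lemma birkhoff_plus_factor_gauge:
  assumes P: "loop_plus_star P" and M: "loop_minus M"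
    and P': "loop_plus_star P'" and M': "loop_minus M'"
    and U: "\<And>z. z \<noteq> 0 \<Longrightarrow> U z = P z ** M z"
    and U': "\<And>z. z \<noteq> 0 \<Longrightarrow> rot (- a) ** U z ** rot b = P' z ** M' z" and "z \<noteq> 0"
  shows "P' z = rot (- a) ** P z ** rot a"
proof -
  have "rot (- a) ** P w ** rot a ** (rot (- a) ** M w ** rot b) = P' w ** M' w"
    if "w \<noteq> 0" for w
  proof -
    have "rot (- a) ** P w ** rot a ** (rot (- a) ** M w ** rot b)
        = rot (- a) ** P w ** (rot a ** rot (- a)) ** M w ** rot b"
      by (simp only: matrix_mul_assoc)
    also have "\<dots> = rot (- a) ** U w ** rot b"
      using U[OF that] by (simp add: rot_inverse matrix_mul_assoc)
    finally show ?thesis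
      using U'[OF that] by simp
  qed
  then have "rot (- a) ** P z ** rot a = P' z"
    using \<open>z \<noteq> 0\<close>
    by (rule birkhoff_plus_factor_unique[OF loop_plus_star_rot_conj[OF P] P'
          loop_minus_rot_mult[where a = "- a" and b = b, OF M] M'])
  then show ?thesis
    by simp
qed

lemma birkhoff_minus_factor_gauge:
  assumes "loop_minus_star P" "loop_plus M" "loop_minus_star P'" "loop_plus M'"
    and "\<And>z. z \<noteq> 0 \<Longrightarrow> U z = P z ** M z"
    and "\<And>z. z \<noteq> 0 \<Longrightarrow> rot (- a) ** U z ** rot b = P' z ** M' z" and "z \<noteq> 0"
  shows "P' z = rot (- a) ** P z ** rot a"
  using birkhoff_plus_factor_gauge[OF loop_minus_star_reflect[OF assms(1)] loop_plus_reflect[OF assms(2)]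
      loop_minus_star_reflect[OF assms(3)] loop_plus_reflect[OF assms(4)],
      of "\<lambda>z. U (inverse z)" a b "inverse z"] assms(5-7)
  by simp

lemma smooth2_on_differentiable_at:
  assumes "smooth2_on S f" "open S" "p \<in> S"
  shows "f differentiable (at p)"
proof -
  obtain F where "f \<in> F" and F: "\<forall>g\<in>F. \<exists>gx\<in>F. \<exists>gy\<in>F. \<forall>p\<in>S.
      (g has_derivative (\<lambda>h. fst h *\<^sub>R gx p + snd h *\<^sub>R gy p)) (at p within S)"
    using assms(1) unfolding smooth2_on_def by (elim exE conjE)
  obtain gx gy where "\<forall>p\<in>S. (f has_derivative (\<lambda>h. fst h *\<^sub>R gx p + snd h *\<^sub>R gy p)) (at p within S)"
    using bspec[OF F \<open>f \<in> F\<close>] by (elim bexE)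
  then have "(f has_derivative (\<lambda>h. fst h *\<^sub>R gx p + snd h *\<^sub>R gy p)) (at p within S)"
    using assms(3) by blast
  then have "(f has_derivative (\<lambda>h. fst h *\<^sub>R gx p + snd h *\<^sub>R gy p)) (at p)"
    by (simp only: at_within_open[OF assms(3,2)])
  then show ?thesis
    unfolding differentiable_def by blast
qed

lemma vector_derivative_bounded_linear_transform:
  fixes f :: "real \<Rightarrow> 'a::real_normed_vector"
  assumes "bounded_linear L" "f differentiable (at x)" "open T" "x \<in> T"
    and "\<And>s. s \<in> T \<Longrightarrow> g s = L (f s)"
  shows "vector_derivative g (at x) = L (vector_derivative f (at x))"
proof -
  have "(f has_vector_derivative vector_derivative f (at x)) (at x)"
    using assms(2) by (simp add: vector_derivative_works[symmetric])
  then have "((\<lambda>s. L (f s)) has_vector_derivative L (vector_derivative f (at x))) (at x)"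
    by (rule bounded_linear.has_vector_derivative[OF assms(1)])
  then have "(g has_vector_derivative L (vector_derivative f (at x))) (at x)"
    by (rule has_vector_derivative_transform_within_open[OF _ assms(3,4)]) (simp add: assms(5))
  then show ?thesis
    by (rule vector_derivative_at)
qed

lemma
  assumes L: "bounded_linear L" and S: "open S" "(x, y) \<in> S"
    and f: "smooth2_on S (\<lambda>p. f (fst p) (snd p) lam)"
    and g: "\<And>a b. (a, b) \<in> S \<Longrightarrow> g a b lam = L (f a b lam)"
  shows partial_x_bounded_linear_transform: "partial_x g x y lam = L (partial_x f x y lam)"
    and partial_y_bounded_linear_transform: "partial_y g x y lam = L (partial_y f x y lam)"
proof -
  have f_diff: "(\<lambda>p. f (fst p) (snd p) lam) differentiable (at (x, y))"
    by (rule smooth2_on_differentiable_at[OF f S])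
  have "(\<lambda>s. f s y lam) differentiable (at x)"
    using differentiable_chain_at[of "\<lambda>s. (s, y)" x, OF _ f_diff]
    by (simp add: o_def)
  moreover have "open ((\<lambda>s. (s, y)) -` S)" "x \<in> (\<lambda>s. (s, y)) -` S"
    using S by (auto intro!: continuous_intros)
  ultimately show "partial_x g x y lam = L (partial_x f x y lam)"
    unfolding partial_x_def using g by (rule vector_derivative_bounded_linear_transform[OF L]) simp
  have "(\<lambda>t. f x t lam) differentiable (at y)"
    using differentiable_chain_at[of "\<lambda>t. (x, t)" y, OF _ f_diff]
    by (simp add: o_def)
  moreover have "open ((\<lambda>t. (x, t)) -` S)" "y \<in> (\<lambda>t. (x, t)) -` S"
    using S by (auto intro!: continuous_intros)
  ultimately show "partial_y g x y lam = L (partial_y f x y lam)"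
    unfolding partial_y_def using g by (rule vector_derivative_bounded_linear_transform[OF L]) simp
qed

lemma
  assumes "open S" "(x, y) \<in> S" "smooth2_on S (\<lambda>p. f (fst p) (snd p) lam)"
    and "invertible (f x y lam)" "A' ** A = mat 1"
    and "\<And>a b. (a, b) \<in> S \<Longrightarrow> g a b lam = A' ** f a b lam ** A"
  shows maurer_cartan_x_conj: "cscale c (matrix_inv (g x y lam) ** partial_x g x y lam)
      = A' ** cscale c (matrix_inv (f x y lam) ** partial_x f x y lam) ** A"
    and maurer_cartan_y_conj: "cscale c (matrix_inv (g x y lam) ** partial_y g x y lam)
      = A' ** cscale c (matrix_inv (f x y lam) ** partial_y f x y lam) ** A"
proof -
  have "g x y lam = A' ** f x y lam ** A"
    using assms(2,6) by blast
  moreover have "partial_x g x y lam = A' ** partial_x f x y lam ** A"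
    using assms(6) by (rule partial_x_bounded_linear_transform[where f = f and lam = lam,
          OF bounded_linear_matrix_mult_both assms(1-3)])
  moreover have "partial_y g x y lam = A' ** partial_y f x y lam ** A"
    using assms(6) by (rule partial_y_bounded_linear_transform[where f = f and lam = lam,
          OF bounded_linear_matrix_mult_both assms(1-3)])
  ultimately show "cscale c (matrix_inv (g x y lam) ** partial_x g x y lam)
      = A' ** cscale c (matrix_inv (f x y lam) ** partial_x f x y lam) ** A"
    and "cscale c (matrix_inv (g x y lam) ** partial_y g x y lam)
      = A' ** cscale c (matrix_inv (f x y lam) ** partial_y f x y lam) ** A"
    using assms(4,5) by (simp_all add: cscale_matrix_inv_conj)
qed

theorem proposition3:
  fixes x0 y0 :: real
    and \<phi> \<phi>x \<phi>xy \<theta> :: "real \<times> real \<Rightarrow> real"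
    and U Up Vm Um Vp Uhp Vhm Uhm Vhp :: "real \<Rightarrow> real \<Rightarrow> complex \<Rightarrow> cmat"
    and \<Omega> :: "(real \<times> real) set"
  defines "D \<equiv> {0..x0} \<times> {0..y0}"
  defines "Uh \<equiv> (\<lambda>x y lam. matrix_inv (rot (\<theta> (0,0))) ** U x y lam ** rot (\<theta> (x,y)))"
  assumes x0: "x0 > 0" and y0: "y0 > 0"
    and phi_smooth: "smooth2_on D \<phi>"
    and phi_x: "\<And>x y. (x,y) \<in> D \<Longrightarrow>
        ((\<lambda>s. \<phi> (s, y)) has_real_derivative \<phi>x (x,y)) (at x within {0..x0})"
    and phi_xy: "\<And>x y. (x,y) \<in> D \<Longrightarrow>
        ((\<lambda>t. \<phi>x (x, t)) has_real_derivative \<phi>xy (x,y)) (at y within {0..y0})"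
    and sine_Gordon: "\<And>p. p \<in> D \<Longrightarrow> \<phi>xy p = sin (\<phi> p)"
    and frame_x: "\<And>x y lam. (x,y) \<in> D \<Longrightarrow> lam \<noteq> 0 \<Longrightarrow>
        ((\<lambda>s. U s y lam) has_vector_derivative
           (U x y lam ** cscale (\<i> / 2) (mat2 (of_real (\<phi>x (x,y))) (- lam) (- lam) (- of_real (\<phi>x (x,y))))))
        (at x within {0..x0})"
    and frame_y: "\<And>x y lam. (x,y) \<in> D \<Longrightarrow> lam \<noteq> 0 \<Longrightarrow>
        ((\<lambda>t. U x t lam) has_vector_derivative
           (U x y lam ** cscale (\<i> / 2 * inverse lam)
              (mat2 0 (exp (- \<i> * of_real (\<phi> (x,y)))) (exp (\<i> * of_real (\<phi> (x,y)))) 0)))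
        (at y within {0..y0})"
    and frame_init: "\<And>lam. lam \<noteq> 0 \<Longrightarrow> U 0 0 lam = mat 1"
    and theta_smooth: "smooth2_on D \<theta>"
    and Omega_open: "open \<Omega>" and Omega_sub: "\<Omega> \<subseteq> D"
    and fact_loops: "\<And>x y. (x,y) \<in> \<Omega> \<Longrightarrow>
        loop_plus_star (Up x y) \<and> loop_minus (Vm x y) \<and>
        loop_minus_star (Um x y) \<and> loop_plus (Vp x y) \<and>
        loop_plus_star (Uhp x y) \<and> loop_minus (Vhm x y) \<and>
        loop_minus_star (Uhm x y) \<and> loop_plus (Vhp x y)"
    and fact_eqs: "\<And>x y lam. (x,y) \<in> \<Omega> \<Longrightarrow> lam \<noteq> 0 \<Longrightarrow>
        U x y lam = Up x y lam ** Vm x y lam \<and> U x y lam = Um x y lam ** Vp x y lam \<and>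
        Uh x y lam = Uhp x y lam ** Vhm x y lam \<and> Uh x y lam = Uhm x y lam ** Vhp x y lam"
    and fact_smooth: "\<And>lam. lam \<noteq> 0 \<Longrightarrow>
        smooth2_on \<Omega> (\<lambda>p. Up (fst p) (snd p) lam) \<and> smooth2_on \<Omega> (\<lambda>p. Vm (fst p) (snd p) lam) \<and>
        smooth2_on \<Omega> (\<lambda>p. Um (fst p) (snd p) lam) \<and> smooth2_on \<Omega> (\<lambda>p. Vp (fst p) (snd p) lam) \<and>
        smooth2_on \<Omega> (\<lambda>p. Uhp (fst p) (snd p) lam) \<and> smooth2_on \<Omega> (\<lambda>p. Vhm (fst p) (snd p) lam) \<and>
        smooth2_on \<Omega> (\<lambda>p. Uhm (fst p) (snd p) lam) \<and> smooth2_on \<Omega> (\<lambda>p. Vhp (fst p) (snd p) lam)"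
  shows "\<forall>x y lam. (x,y) \<in> \<Omega> \<and> lam \<noteq> 0 \<longrightarrow>
      cscale (- inverse lam) (matrix_inv (Uhp x y lam) ** partial_x Uhp x y lam)
        = matrix_inv (rot (\<theta> (0,0))) ** cscale (- inverse lam) (matrix_inv (Up x y lam) ** partial_x Up x y lam) ** rot (\<theta> (0,0))
    \<and> cscale (- lam) (matrix_inv (Uhm x y lam) ** partial_y Uhm x y lam)
        = matrix_inv (rot (\<theta> (0,0))) ** cscale (- lam) (matrix_inv (Um x y lam) ** partial_y Um x y lam) ** rot (\<theta> (0,0))"
proof (intro allI impI, goal_cases)
  case (1 x y lam)
  then have xy: "(x, y) \<in> \<Omega>" and lam: "lam \<noteq> 0"
    by auto
  define t where "t = \<theta> (0, 0)"
  have "Uhp a b lam = rot (- t) ** Up a b lam ** rot t"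
    and "Uhm a b lam = rot (- t) ** Um a b lam ** rot t" if "(a, b) \<in> \<Omega>" for a b
    using fact_loops[OF that] fact_eqs[OF that] lam unfolding Uh_def t_def matrix_inv_rot
    by (blast intro: birkhoff_plus_factor_gauge[where U = "U a b" and b = "\<theta> (a, b)"],
        blast intro: birkhoff_minus_factor_gauge[where U = "U a b" and b = "\<theta> (a, b)"])
  moreover have "invertible (Up x y lam)" "invertible (Um x y lam)"
    using fact_loops[OF xy] lam
    by (simp_all add: invertible_det_1 loop_plus_det loop_minus_det loop_plus_star_imp_loop_plus
        loop_minus_star_imp_loop_minus)
  ultimately show ?case
    using fact_smooth[OF lam] unfolding t_def[symmetric] matrix_inv_rot
    by (simp add: maurer_cartan_x_conj[OF Omega_open xy] maurer_cartan_y_conj[OF Omega_open xy]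
        rot_inverse)
qed

end
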